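(* Let $(x_c,y_c,\theta_c)\in\mathbb{R}^2\times\mathbb{S}$ and $t_g>0$, and assume there exists an optimal trajectory $(x(t),y(t),\theta(t))$, $t\in[0,t_g]$, of the MECP with duration $t_g$ such that $(x(0),y(0),\theta(0))=(x_c,y_c,\theta_c)$ and $(x(t_g),y(t_g),\theta(t_g))=(0,0,-\pi/2)$. Then for any $T>0$, $$u^*(t_g,x_c,y_c,\theta_c)=\frac{T}{t_g}\,u^*\!\left(T,\frac{T}{t_g}x_c,\frac{T}{t_g}y_c,\theta_c\right).$$
   Context: Kinematics: $\dot x=\cos\theta$, $\dot y=\sin\theta$, $\dot\theta=u$, with state $(x,y,\theta)\in\mathbb{R}^2\times\mathbb{S}$ ($\mathbb{S}$ the circle of angles) and measurable control $u$. The MECP with duration $t_g$ from state $\boldsymbol z_c$: steer the system on a time interval of length $t_g$ from $\boldsymbol z_c$ to the final state $(0,0,-\pi/2)$ while minimizing $\int \tfrac12u^2\,dt$ over that interval. The optimal feedback control $u^*(t_g,\boldsymbol z_c)$ denotes the value at the initial time of the optimal control of the MECP starting at state $\boldsymbol z_c$ with time-to-go $t_g$; equivalently, along an optimal trajectory $\boldsymbol z(t)$ with optimal control $u(t)$ on $[0,t_f]$, $u^*(t_f-t,\boldsymbol z(t))=u(t)$ for all $t\in[0,t_f)$. *)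

theory Defs
  imports "HOL-Analysis.Analysis"
begin

text \<open>Kinematics x' = cos theta, y' = sin theta, theta' = u on [0,tg], state z = (x,y,theta).
  The angle is represented by a real number; the terminal angle condition is taken modulo 2 pi.
  Trajectories are the (absolutely continuous) solutions given in integral form.\<close>

definition theta_traj :: "real \<Rightarrow> (real \<Rightarrow> real) \<Rightarrow> real \<Rightarrow> real" where
  "theta_traj th0 u t = th0 + integral {0..t} u"

definition x_traj :: "real \<Rightarrow> real \<Rightarrow> (real \<Rightarrow> real) \<Rightarrow> real \<Rightarrow> real" where
  "x_traj x0 th0 u t = x0 + integral {0..t} (\<lambda>s. cos (theta_traj th0 u s))"

definition y_traj :: "real \<Rightarrow> real \<Rightarrow> (real \<Rightarrow> real) \<Rightarrow> real \<Rightarrow> real" where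
  "y_traj y0 th0 u t = y0 + integral {0..t} (\<lambda>s. sin (theta_traj th0 u s))"

definition admissible :: "real \<Rightarrow> real \<times> real \<times> real \<Rightarrow> (real \<Rightarrow> real) \<Rightarrow> bool" where
  "admissible tg z u \<longleftrightarrow> (case z of (x0, y0, th0) \<Rightarrow>
     u absolutely_integrable_on {0..tg} \<and>
     (\<lambda>t. (u t)\<^sup>2) integrable_on {0..tg} \<and>
     x_traj x0 th0 u tg = 0 \<and> y_traj y0 th0 u tg = 0 \<and>
     (\<exists>k::int. theta_traj th0 u tg = - pi / 2 + 2 * pi * of_int k))"

definition cost :: "real \<Rightarrow> (real \<Rightarrow> real) \<Rightarrow> real" where
  "cost tg u = integral {0..tg} (\<lambda>t. (u t)\<^sup>2 / 2)"

definition MECP_optimal :: "real \<Rightarrow> real \<times> real \<times> real \<Rightarrow> (real \<Rightarrow> real) \<Rightarrow> bool" where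
  "MECP_optimal tg z u \<longleftrightarrow> admissible tg z u \<and> (\<forall>w. admissible tg z w \<longrightarrow> cost tg u \<le> cost tg w)"

text \<open>v is a value of the optimal feedback u*(tg,z): the value at the initial time of an
  optimal control (taken as its right limit at 0, which is independent of the a.e. representative).
  Since optimal controls need not be unique, u* is treated as a relation.\<close>
definition feedback_value :: "real \<Rightarrow> real \<times> real \<times> real \<Rightarrow> real \<Rightarrow> bool" where
  "feedback_value tg z v \<longleftrightarrow> (\<exists>u. MECP_optimal tg z u \<and> (u \<longlongrightarrow> v) (at_right 0))"

end

theory Submission
  imports Defs
begin

text \<open>Dilating time and the plane by the same factor \<open>c > 0\<close> maps solutions of the
  kinematics to solutions: if \<open>(x, y, \<theta>)\<close> is driven by \<open>u\<close> on \<open>[0, t]\<close>, then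
  \<open>(c x(s/c), c y(s/c), \<theta>(s/c))\<close> is driven by \<open>u(s/c)/c\<close> on \<open>[0, c t]\<close>. This preserves the
  target \<open>(0, 0, -\<pi>/2)\<close> and divides the energy by \<open>c\<close>, so it is a bijection between the
  optimal controls of the two MECPs (its inverse is the dilation by \<open>1/c\<close>), and it divides the
  initial value of the control by \<open>c\<close>.\<close>

lemma integrable_on_dilation_iff:
  fixes f :: "real \<Rightarrow> 'b::real_normed_vector"
  assumes "c > 0"
  shows "(\<lambda>s. f (s / c)) integrable_on {c * a..c * b} \<longleftrightarrow> f integrable_on {a..b}"
  using integrable_stretch_real_iff[of "1 / c" f a b] image_mult_atLeastAtMost[of c a b] assms
  by (simp add: mult.commute)

lemma integral_dilation:
  fixes f :: "real \<Rightarrow> 'b::real_normed_vector"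
  assumes "c > 0"
  shows "integral {c * a..c * b} (\<lambda>s. f (s / c)) = c *\<^sub>R integral {a..b} f"
  using integral_stretch_real[of "1 / c" a b f] image_mult_atLeastAtMost[of c a b] assms
  by (simp add: mult.commute)

definition dilate_control :: "real \<Rightarrow> (real \<Rightarrow> real) \<Rightarrow> real \<Rightarrow> real" where
  "dilate_control c u = (\<lambda>s. u (s / c) / c)"

lemma theta_traj_dilate_control:
  assumes "c > 0"
  shows "theta_traj th (dilate_control c u) s = theta_traj th u (s / c)"
  using integral_dilation[OF assms, where f = u and a = 0 and b = "s / c"] assms
  by (simp add: theta_traj_def dilate_control_def)

lemma integral_comp_theta_traj_dilate_control:
  fixes g :: "real \<Rightarrow> real"
  assumes "c > 0"
  shows "integral {0..c * t} (\<lambda>s. g (theta_traj th (dilate_control c u) s))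
       = c * integral {0..t} (\<lambda>s. g (theta_traj th u s))"
  using integral_dilation[OF assms, where f = "\<lambda>s. g (theta_traj th u s)" and a = 0 and b = t] assms
  by (simp add: theta_traj_dilate_control)

lemma x_traj_dilate_control:
  assumes "c > 0"
  shows "x_traj (c * x) th (dilate_control c u) (c * t) = c * x_traj x th u t"
  using integral_comp_theta_traj_dilate_control[OF assms, where g = cos]
  by (simp add: x_traj_def distrib_left)

lemma y_traj_dilate_control:
  assumes "c > 0"
  shows "y_traj (c * y) th (dilate_control c u) (c * t) = c * y_traj y th u t"
  using integral_comp_theta_traj_dilate_control[OF assms, where g = sin]
  by (simp add: y_traj_def distrib_left)

lemma integrable_on_comp_dilate_control_iff:
  assumes "c > 0"
  shows "(\<lambda>s. g (dilate_control c u s)) integrable_on {0..c * t}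
     \<longleftrightarrow> (\<lambda>s. g (u s / c)) integrable_on {0..t}"
  using integrable_on_dilation_iff[OF assms, where f = "\<lambda>s. g (u s / c)" and a = 0 and b = t]
  by (simp add: dilate_control_def)

lemma cost_dilate_control:
  assumes "c > 0"
  shows "cost (c * t) (dilate_control c u) = cost t u / c"
proof -
  have "cost (c * t) (dilate_control c u) = integral {0..c * t} (\<lambda>s. (u (s / c))\<^sup>2 / 2 / c\<^sup>2)"
    by (simp add: cost_def dilate_control_def power_divide)
  also have "\<dots> = c * cost t u / c\<^sup>2"
    using integral_dilation[OF assms, where f = "\<lambda>s. (u s)\<^sup>2 / 2" and a = 0 and b = t] by (simp add: cost_def)
  finally show ?thesis
    using assms by (simp add: power2_eq_square)
qed

lemma admissible_dilate_control:
  assumes "c > 0" and "admissible t (x, y, th) u"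
  shows "admissible (c * t) (c * x, c * y, th) (dilate_control c u)"
proof -
  have u: "u integrable_on {0..t}" "(\<lambda>s. norm (u s)) integrable_on {0..t}"
    "(\<lambda>s. (u s)\<^sup>2) integrable_on {0..t}"
    using assms(2) by (auto simp: admissible_def absolutely_integrable_on_def)
  have "(\<lambda>s. u s / c) integrable_on {0..t}" "(\<lambda>s. norm (u s / c)) integrable_on {0..t}"
    "(\<lambda>s. (u s / c)\<^sup>2) integrable_on {0..t}"
    using u assms(1) by (simp_all add: integrable_on_divide power_divide)
  then have "dilate_control c u absolutely_integrable_on {0..c * t}"
    "(\<lambda>s. (dilate_control c u s)\<^sup>2) integrable_on {0..c * t}"
    using integrable_on_comp_dilate_control_iff[OF assms(1), of "\<lambda>v. v" u t]
      integrable_on_comp_dilate_control_iff[OF assms(1), of norm u t]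
      integrable_on_comp_dilate_control_iff[OF assms(1), of "\<lambda>v. v\<^sup>2" u t]
    by (simp_all add: absolutely_integrable_on_def)
  moreover have "theta_traj th (dilate_control c u) (c * t) = theta_traj th u t"
    using assms(1) by (simp add: theta_traj_dilate_control)
  ultimately show ?thesis
    using assms by (simp add: admissible_def x_traj_dilate_control y_traj_dilate_control)
qed

lemma MECP_optimal_dilate_control:
  assumes "c > 0" and opt: "MECP_optimal t (x, y, th) u"
  shows "MECP_optimal (c * t) (c * x, c * y, th) (dilate_control c u)"
  unfolding MECP_optimal_def
proof safe
  show "admissible (c * t) (c * x, c * y, th) (dilate_control c u)"
    using admissible_dilate_control assms by (auto simp: MECP_optimal_def)
next
  fix w
  assume "admissible (c * t) (c * x, c * y, th) w"
  then have "admissible (1 / c * (c * t)) (1 / c * (c * x), 1 / c * (c * y), th)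
      (dilate_control (1 / c) w)"
    using assms(1) by (intro admissible_dilate_control) simp_all
  then have "cost t u \<le> cost t (dilate_control (1 / c) w)"
    using opt assms(1) by (simp add: MECP_optimal_def)
  also have "\<dots> = c * cost (c * t) w"
    using cost_dilate_control[of "1 / c" "c * t" w] assms(1) by simp
  finally show "cost (c * t) (dilate_control c u) \<le> cost (c * t) w"
    using assms(1) by (simp add: cost_dilate_control pos_divide_le_eq mult.commute)
qed

lemma tendsto_at_right_0_dilate_control:
  assumes "c > 0" and "(u \<longlongrightarrow> v) (at_right 0)"
  shows "(dilate_control c u \<longlongrightarrow> v / c) (at_right 0)"
proof -
  have "filterlim (\<lambda>s. s / c) (at_right 0) (at_right 0)"
    using assms(1) by real_asymp
  with assms(2) have "((\<lambda>s. u (s / c)) \<longlongrightarrow> v) (at_right 0)"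
    by (rule filterlim_compose)
  then show ?thesis
    unfolding dilate_control_def by (intro tendsto_divide) (use assms(1) in auto)
qed

lemma feedback_value_dilate:
  assumes "c > 0" and "feedback_value t (x, y, th) v"
  shows "feedback_value (c * t) (c * x, c * y, th) (v / c)"
  using assms MECP_optimal_dilate_control tendsto_at_right_0_dilate_control
  unfolding feedback_value_def by blast

lemma feedback_value_dilate_iff:
  assumes "c > 0"
  shows "feedback_value (c * t) (c * x, c * y, th) (v / c) \<longleftrightarrow> feedback_value t (x, y, th) v"
  using feedback_value_dilate[OF assms] feedback_value_dilate[of "1 / c" "c * t" "c * x" "c * y" th "v / c"]
    assms by auto

theorem lemma3:
  fixes xc yc thc tg T :: real
  assumes "tg > 0"
    and "\<exists>u. MECP_optimal tg (xc, yc, thc) u"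
    and "T > 0"
  shows "\<forall>v. feedback_value tg (xc, yc, thc) v \<longleftrightarrow>
             feedback_value T (T / tg * xc, T / tg * yc, thc) (tg / T * v)"
proof
  fix v
  have "T / tg > 0" "T / tg * tg = T" "v / (T / tg) = tg / T * v"
    using assms(1,3) by simp_all
  then show "feedback_value tg (xc, yc, thc) v \<longleftrightarrow>
             feedback_value T (T / tg * xc, T / tg * yc, thc) (tg / T * v)"
    using feedback_value_dilate_iff[of "T / tg" tg xc yc thc v] by (simp add: mult.commute)
qed

end
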